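(* Let $p\ge 1$, $m=2p$, $j=\mathrm{diag}(I_p,-I_p)$. Fix a function $\theta$ assigning to each $m\times m$ matrix $R$ with $R=R^*>0$, $RjR=j$ a nonzero complex number $\theta(R)$. (i) Let $\{R_k\}_{k\ge0}$ be $m\times m$ matrices with $R_k=R_k^*>0$ and $R_kjR_k=j$, put $\theta_k=\theta(R_k)$, $U_0=I_m$, $U_k=(ijR_0)(ijR_1)\cdots(ijR_{k-1})$ for $k>0$, and $C_k=(U_k^* )^{-1}R_k^2U_k^{-1}$. Then $C_k>0$, $C_k=C_k^*$ and $C_kjC_k=j$ for all $k$, and whenever $X_k(z)$ solves the block Szeg\"o recurrence $X_{k+1}(z)=\theta_kR_k\,\mathrm{diag}(zI_p,I_p)X_k(z)$, the function $$W_k(\lambda)=\frac{(i-\lambda^{-1})^k}{\prod_{r=0}^{k-1}\theta_r}\,U_k\,\mathrm{diag}(zI_p,I_p)\,X_k(z),\qquad z=\frac{1+i\lambda}{1-i\lambda},$$ solves the discrete Dirac system $W_{k+1}(\lambda)-W_k(\lambda)=-\frac{i}{\lambda}jC_kW_k(\lambda)$. (ii) Conversely, let $\{C_k\}_{k\ge0}$ be $m\times m$ matrices with $C_k>0$, $C_k=C_k^*$, $C_kjC_k=j$. Define recursively $U_0=I_m$, $R_k=(U_k^*C_kU_k)^{1/2}$ (positive square root), $U_{k+1}=U_k(ijR_k)$. Then $R_k=R_k^*>0$, $R_kjR_k=j$ and $C_k=(U_k^* )^{-1}R_k^2U_k^{-1}$ for all $k$. Consequently the maps in (i) and (ii) are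 mutually inverse, giving a one-to-one correspondence between such Dirac type systems (with $C_k>0$) and block Szeg\"o recurrences with $R_k>0$, $\theta_k=\theta(R_k)$.
   Context: $I_p$ denotes the $p\times p$ identity matrix. For a positive definite matrix, $(\cdot)^{1/2}$ is its positive definite square root. *)

theory Defs
  imports "HOL-Analysis.Analysis"
begin

text \<open>Square m x m complex matrices with m = 2p are indexed by the type 'p + 'p:
  indices Inl i form the first block of size p, indices Inr i the second one.\<close>

type_synonym 'p cmat = "complex ^ ('p + 'p) ^ ('p + 'p)"

definition cadj :: "complex ^ 'n ^ 'm \<Rightarrow> complex ^ 'm ^ 'n" where
  "cadj A = (\<chi> i j. cnj (A $ j $ i))"

definition hermitian :: "complex ^ 'n ^ 'n \<Rightarrow> bool" where
  "hermitian A \<longleftrightarrow> cadj A = A"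

definition posdef :: "complex ^ 'n ^ 'n \<Rightarrow> bool" where
  "posdef A \<longleftrightarrow> (\<forall>x::complex^'n. x \<noteq> 0 \<longrightarrow>
      (let q = (\<Sum>i\<in>UNIV. cnj (x $ i) * (A *v x) $ i) in q \<in> \<real> \<and> Re q > 0))"

definition psqrt :: "complex ^ 'n ^ 'n \<Rightarrow> complex ^ 'n ^ 'n" where
  "psqrt A = (THE S. hermitian S \<and> posdef S \<and> S ** S = A)"

definition bdiag :: "complex \<Rightarrow> complex \<Rightarrow> ('p::finite) cmat" where
  "bdiag a b = (\<chi> i k. if i = k then (case i of Inl _ \<Rightarrow> a | Inr _ \<Rightarrow> b) else 0)"

definition jmat :: "('p::finite) cmat" where
  "jmat = bdiag 1 (-1)"

definition jadm :: "('p::finite) cmat \<Rightarrow> bool" where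
  "jadm R \<longleftrightarrow> hermitian R \<and> posdef R \<and> R ** jmat ** R = jmat"

primrec szegoU :: "(nat \<Rightarrow> ('p::finite) cmat) \<Rightarrow> nat \<Rightarrow> ('p::finite) cmat" where
  "szegoU R 0 = mat 1"
| "szegoU R (Suc k) = szegoU R k ** (mat \<i> ** jmat ** R k)"

primrec diracU :: "(nat \<Rightarrow> ('p::finite) cmat) \<Rightarrow> nat \<Rightarrow> ('p::finite) cmat" where
  "diracU C 0 = mat 1"
| "diracU C (Suc k) = diracU C k **
     (mat \<i> ** jmat ** psqrt (cadj (diracU C k) ** C k ** diracU C k))"

definition diracR :: "(nat \<Rightarrow> ('p::finite) cmat) \<Rightarrow> nat \<Rightarrow> ('p::finite) cmat" where
  "diracR C k = psqrt (cadj (diracU C k) ** C k ** diracU C k)"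

end

theory Submission
  imports Defs
begin

text \<open>
  Every factor i j R_k of U_k is j-unitary (U^* j U = j), hence so is U_k, and
  C_k = (U_k^*)^-1 R_k^2 U_k^-1 is congruent to R_k^2: it is positive definite, and C_k j C_k = j
  follows from R_k j R_k = j. Under the Cayley transform z = (1 + i lambda)/(1 - i lambda) the
  matrix diag(z I_p, I_p) is affine in j, and since (j R_k)^2 = I one Szego step becomes exactly
  one Dirac step. Conversely R_k = (U_k^* C_k U_k)^(1/2) satisfies R_k^2 j R_k^2 = j, and
  uniqueness of positive definite square roots upgrades this to R_k j R_k = j; the same
  uniqueness makes the two constructions mutually inverse. Positive square roots exist by
  Banach's fixed point theorem and are unique by a trace argument.
\<close>

lemma cadj_cadj [simp]: "cadj (cadj A) = A"
  by (simp add: cadj_def vec_eq_iff)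

lemma cadj_matrix_mul: "cadj (A ** B) = cadj B ** cadj A"
  by (simp add: cadj_def matrix_matrix_mult_def vec_eq_iff mult.commute)

lemma cadj_mat [simp]: "cadj (mat c) = mat (cnj c)"
  by (simp add: cadj_def mat_def vec_eq_iff)

lemma cadj_zero [simp]: "cadj 0 = 0"
  by (simp add: cadj_def vec_eq_iff)

lemma cadj_add: "cadj (A + B) = cadj A + cadj B"
  by (simp add: cadj_def vec_eq_iff)

lemma cadj_diff: "cadj (A - B) = cadj A - cadj B"
  by (simp add: cadj_def vec_eq_iff)

lemma cadj_scaleR: "cadj (c *\<^sub>R A) = c *\<^sub>R cadj A"
  by (simp add: cadj_def vec_eq_iff)

lemma hermitian_congruence: "hermitian A \<Longrightarrow> hermitian (cadj V ** A ** V)"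
  by (simp add: hermitian_def cadj_matrix_mul matrix_mul_assoc)

lemma matrix_add_rdistrib: "((A::'a::semiring_1^'n^'m) + B) ** C = A ** C + B ** C"
  by (simp add: matrix_matrix_mult_def vec_eq_iff sum.distrib algebra_simps)

lemma matrix_diff_ldistrib: "(A::'a::ring_1^'n^'m) ** (B - C) = A ** B - A ** C"
  by (simp add: matrix_matrix_mult_def vec_eq_iff sum_subtractf algebra_simps)

lemma matrix_diff_rdistrib: "((A::'a::ring_1^'n^'m) - B) ** C = A ** C - B ** C"
  by (simp add: matrix_matrix_mult_def vec_eq_iff sum_subtractf algebra_simps)

lemma matrix_mul_uminus_right: "(A::'a::ring_1^'n^'m) ** (- B) = - (A ** B)"
  by (simp add: matrix_matrix_mult_def vec_eq_iff sum_negf)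

lemma trace_uminus: "trace (- (A::'a::ring_1^'n^'n)) = - trace A"
  by (simp add: trace_def sum_negf)

lemma mat_matrix_mul_component: "(mat c ** (A::'a::semiring_1^'n^'m)) $ i $ k = c * A $ i $ k"
  by (simp add: matrix_matrix_mult_def mat_def if_distrib if_distribR cong: if_cong)

lemma matrix_mul_mat_component: "((A::'a::semiring_1^'n^'m) ** mat c) $ i $ k = A $ i $ k * c"
  by (simp add: matrix_matrix_mult_def mat_def if_distrib if_distribR cong: if_cong)

lemma matrix_mul_mat_commute: "(A::'a::comm_semiring_1^'n^'m) ** mat c = mat c ** A"
  by (simp add: vec_eq_iff mat_matrix_mul_component matrix_mul_mat_component mult.commute)

text \<open>The guard keeps the simplifier from swapping two scalar matrices forever.\<close>
lemma matrix_mul_mat_left_commute: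
  "NO_MATCH (mat d) A \<Longrightarrow> (A::'a::comm_semiring_1^'n^'m) ** (mat c ** B) = mat c ** (A ** B)"
  by (metis matrix_mul_assoc matrix_mul_mat_commute)

lemma mat_mul_mat: "mat a ** (mat b ** (B::'a::semiring_1^'n^'m)) = mat (a * b) ** B"
  by (simp add: vec_eq_iff mat_matrix_mul_component mult.assoc)

lemma mat_mult_mat: "mat a ** mat b = (mat (a * b) :: 'a::semiring_1^'n^'n)"
  using mat_mul_mat[of a b "mat 1"] by simp

lemma bdiag_mult: "bdiag a b ** bdiag c d = (bdiag (a * c) (b * d) :: 'p::finite cmat)"
proof -
  define s :: "complex \<Rightarrow> complex \<Rightarrow> 'p + 'p \<Rightarrow> complex"
    where "s x y = case_sum (\<lambda>_. x) (\<lambda>_. y)" for x y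
  have entry: "bdiag x y $ i $ k = (if i = k then s x y i else 0)" for x y i k
    by (simp add: bdiag_def s_def)
  have "(bdiag a b ** bdiag c d :: 'p cmat) $ i $ k = bdiag (a * c) (b * d) $ i $ k" for i k
  proof -
    have "(bdiag a b ** bdiag c d :: 'p cmat) $ i $ k
        = (\<Sum>l\<in>UNIV. if l = i then (if i = k then s a b i * s c d i else 0) else 0)"
      unfolding matrix_matrix_mult_def entry vec_lambda_beta by (rule sum.cong) auto
    then show ?thesis by (simp add: entry s_def split: sum.split)
  qed
  then show ?thesis by (simp add: vec_eq_iff)
qed

lemma bdiag_add: "bdiag a b + bdiag c d = bdiag (a + c) (b + d)"
  by (auto simp: bdiag_def vec_eq_iff split: sum.split)

lemma mat_eq_bdiag: "mat c = bdiag c c"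
  by (auto simp: bdiag_def mat_def vec_eq_iff split: sum.split)

lemma cadj_bdiag: "cadj (bdiag a b) = bdiag (cnj a) (cnj b)"
  by (auto simp: bdiag_def cadj_def vec_eq_iff split: sum.split)

lemma jmat_mult_jmat: "jmat ** jmat = mat 1"
  by (simp add: jmat_def bdiag_mult mat_eq_bdiag)

lemma jmat_mult_jmat_left: "jmat ** (jmat ** A) = A"
  by (simp add: matrix_mul_assoc jmat_mult_jmat)

lemma cadj_jmat [simp]: "cadj jmat = jmat"
  by (simp add: jmat_def cadj_bdiag)

lemma invertible_jmat: "invertible jmat"
  using jmat_mult_jmat invertible_left_inverse by blast

lemma matrix_inv_right: "invertible (A::'a::field^'n^'n) \<Longrightarrow> A ** matrix_inv A = mat 1"
  and matrix_inv_left: "invertible A \<Longrightarrow> matrix_inv A ** A = mat 1"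
  unfolding invertible_def matrix_inv_def by (metis (mono_tags, lifting) someI)+

lemma matrix_inv_unique:
  assumes "(B::'a::field^'n^'n) ** A = mat 1"
  shows "matrix_inv A = B"
proof -
  have "invertible A" using assms invertible_left_inverse by blast
  then have "matrix_inv A = (B ** A) ** matrix_inv A" using assms by simp
  also have "\<dots> = B" by (simp flip: matrix_mul_assoc add: matrix_inv_right \<open>invertible A\<close>)
  finally show ?thesis .
qed

lemma invertible_cadj: "invertible (A::complex^'n^'n) \<Longrightarrow> invertible (cadj A)"
  and matrix_inv_cadj: "invertible A \<Longrightarrow> matrix_inv (cadj A) = cadj (matrix_inv A)"
proof -
  assume "invertible A"
  then have "cadj (matrix_inv A) ** cadj A = mat 1"
    by (metis matrix_inv_right cadj_matrix_mul cadj_mat complex_cnj_one)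
  then show "invertible (cadj A)" "matrix_inv (cadj A) = cadj (matrix_inv A)"
    using invertible_left_inverse matrix_inv_unique by blast+
qed

lemma invertible_mulvec_eq_0: "invertible (V::'a::field^'n^'n) \<Longrightarrow> V *v x = 0 \<Longrightarrow> x = 0"
  by (metis matrix_vector_mul_assoc matrix_vector_mul_lid matrix_vector_mult_0_right matrix_inv_left)

section \<open>Positive definite matrices\<close>

definition cinner :: "complex^'n \<Rightarrow> complex^'n \<Rightarrow> complex" where
  "cinner x y = (\<Sum>i\<in>UNIV. cnj (x $ i) * y $ i)"

lemma cinner_zero_right [simp]: "cinner x 0 = 0"
  by (simp add: cinner_def)

lemma cinner_cadj: "cinner x (A *v y) = cinner (cadj A *v x) y"
  unfolding cinner_def cadj_def matrix_vector_mult_def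
  by (simp add: sum_distrib_left sum_distrib_right mult_ac) (rule sum.swap)

lemma cnj_cinner: "cnj (cinner x y) = cinner y x"
  by (simp add: cinner_def mult.commute)

lemma inner_eq_Re_cinner: "inner x y = Re (cinner x y)"
  by (simp add: cinner_def inner_vec_def inner_complex_def Re_sum)

lemma cinner_self: "cinner x x = complex_of_real ((norm x)\<^sup>2)"
proof -
  have "cinner x x \<in> \<real>"
    using cnj_cinner[of x x] Reals_cnj_iff by metis
  moreover have "Re (cinner x x) = (norm x)\<^sup>2"
    by (simp add: inner_eq_Re_cinner [symmetric] power2_norm_eq_inner)
  ultimately show ?thesis by (metis Reals_cases Re_complex_of_real)
qed

lemma hermitian_cinner_real: "hermitian H \<Longrightarrow> cinner x (H *v x) \<in> \<real>"
  using cinner_cadj[of x H x] cnj_cinner[of x "H *v x"] Reals_cnj_iff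
  by (metis hermitian_def)

lemma posdef_cinner:
  "posdef A \<longleftrightarrow> (\<forall>x. x \<noteq> 0 \<longrightarrow> cinner x (A *v x) \<in> \<real> \<and> Re (cinner x (A *v x)) > 0)"
  by (simp add: posdef_def cinner_def Let_def)

lemma posdefD: "posdef A \<Longrightarrow> x \<noteq> 0 \<Longrightarrow> Re (cinner x (A *v x)) > 0"
  by (simp add: posdef_cinner)

lemma posdef_Re_cinner_nonneg: "posdef A \<Longrightarrow> Re (cinner x (A *v x)) \<ge> 0"
  using posdefD[of A x] by (cases "x = 0") auto

lemma hermitian_posdefI:
  assumes "hermitian A" "\<And>x. x \<noteq> 0 \<Longrightarrow> inner x (A *v x) > 0"
  shows "posdef A"
  using assms hermitian_cinner_real by (auto simp: posdef_cinner inner_eq_Re_cinner)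

lemma posdef_imp_invertible:
  assumes "posdef (A::complex^'n^'n)"
  shows "invertible A"
proof -
  have "A *v x = 0 \<Longrightarrow> x = 0" for x
    using posdefD[OF assms, of x] by (cases "x = 0") auto
  then show ?thesis
    using matrix_left_invertible_ker invertible_left_inverse by blast
qed

lemma posdef_congruence:
  assumes "posdef A" "invertible (V::complex^'n^'n)"
  shows "posdef (cadj V ** A ** V)"
  unfolding posdef_cinner
proof (intro allI impI)
  fix x :: "complex^'n" assume "x \<noteq> 0"
  let ?q = "cinner x ((cadj V ** A ** V) *v x)"
  have "V *v x \<noteq> 0" using invertible_mulvec_eq_0[OF assms(2)] \<open>x \<noteq> 0\<close> by blast
  moreover have "?q = cinner (V *v x) (A *v (V *v x))"
    by (simp add: matrix_vector_mul_assoc [symmetric] cinner_cadj)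
  ultimately show "?q \<in> \<real> \<and> Re ?q > 0"
    using assms(1) by (simp add: posdef_cinner)
qed

lemma posdef_mat_1: "posdef (mat 1)"
  by (simp add: posdef_cinner cinner_self)

lemma posdef_square:
  assumes "hermitian S" "posdef (S::complex^'n^'n)"
  shows "posdef (S ** S)"
  using posdef_congruence[OF posdef_mat_1 posdef_imp_invertible[OF assms(2)]] assms(1)
  by (simp add: hermitian_def)

lemma hermitian_square: "hermitian S \<Longrightarrow> hermitian (S ** S)"
  by (simp add: hermitian_def cadj_matrix_mul)

lemma hermitian_matrix_inv:
  assumes "hermitian A" "invertible (A::complex^'n^'n)"
  shows "hermitian (matrix_inv A)"
  using assms matrix_inv_cadj by (metis hermitian_def)

lemma posdef_matrix_inv:
  assumes "hermitian A" "posdef (A::complex^'n^'n)"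
  shows "posdef (matrix_inv A)"
proof -
  let ?B = "matrix_inv A"
  have iA: "invertible A" using posdef_imp_invertible[OF assms(2)] .
  then have "invertible ?B" using matrix_inv_right invertible_left_inverse by blast
  moreover have "cadj ?B ** A ** ?B = ?B"
    using hermitian_matrix_inv[OF assms(1) iA]
    by (simp add: hermitian_def matrix_inv_left[OF iA])
  ultimately show ?thesis using posdef_congruence[OF assms(2)] by metis
qed

section \<open>Positive square roots\<close>

lemma congruence_diag_entry:
  "(cadj D ** P ** D) $ i $ i = cinner (column i D) (P *v column i D)"
proof -
  have "(cadj D ** P ** D) $ i $ i = (\<Sum>b\<in>UNIV. \<Sum>a\<in>UNIV. cnj (D$a$i) * P$a$b * D$b$i)"
    by (simp add: matrix_matrix_mult_def cadj_def sum_distrib_right)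
  also have "\<dots> = (\<Sum>a\<in>UNIV. \<Sum>b\<in>UNIV. cnj (D$a$i) * P$a$b * D$b$i)"
    by (rule sum.swap)
  also have "\<dots> = cinner (column i D) (P *v column i D)"
    by (simp add: cinner_def column_def matrix_vector_mult_def sum_distrib_left mult.assoc)
  finally show ?thesis .
qed

text \<open>If \<open>S\<^sup>2 = T\<^sup>2\<close> and \<open>D = S - T\<close>, then \<open>S D = - D T\<close>, so the traces of the
  positive semidefinite matrices \<open>D S D\<close> and \<open>D T D\<close> add up to zero, which forces \<open>D = 0\<close>.\<close>
lemma posdef_sqrt_unique:
  assumes hS: "hermitian (S::complex^'n^'n)" and pS: "posdef S"
    and hT: "hermitian T" and pT: "posdef T" and sq: "S ** S = T ** T"
  shows "S = T"
proof -
  define D where "D = S - T"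
  have hD: "cadj D = D" using hS hT by (simp add: D_def hermitian_def cadj_diff)
  have "S ** D = - (D ** T)"
    using sq by (simp add: D_def matrix_diff_ldistrib matrix_diff_rdistrib matrix_mul_assoc)
  then have "trace (D ** S ** D) = - trace ((D ** T) ** D)"
    by (simp add: matrix_mul_assoc [symmetric] matrix_mul_uminus_right trace_uminus trace_mul_sym[of D])
  then have tr0: "trace (cadj D ** S ** D) + trace (cadj D ** T ** D) = 0"
    by (simp add: hD)
  define g where "g i = Re (cinner (column i D) (S *v column i D)) + Re (cinner (column i D) (T *v column i D))" for i
  have "(\<Sum>i\<in>UNIV. g i) = Re (trace (cadj D ** S ** D) + trace (cadj D ** T ** D))"
    by (simp add: g_def trace_def congruence_diag_entry Re_sum sum.distrib)
  then have "(\<Sum>i\<in>UNIV. g i) = 0" using tr0 by simp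
  moreover have "g i \<ge> 0" for i
    using posdef_Re_cinner_nonneg[OF pS] posdef_Re_cinner_nonneg[OF pT] by (simp add: g_def)
  ultimately have "g i = 0" for i
    using sum_nonneg_eq_0_iff[of UNIV g] by simp
  then have "column i D = 0" for i
    using posdefD[OF pS] posdef_Re_cinner_nonneg[OF pT] unfolding g_def
    by (metis add_pos_nonneg less_irrefl)
  then show ?thesis by (simp add: D_def vec_eq_iff column_def)
qed

lemma matrix_vector_mult_scaleR_right: "(A::complex^'n^'m) *v (c *\<^sub>R x) = c *\<^sub>R (A *v x)"
  and matrix_vector_mult_scaleR_left: "(c *\<^sub>R A) *v x = c *\<^sub>R (A *v x)"
  by (simp_all add: matrix_vector_mult_def vec_eq_iff scaleR_sum_right)

lemma posdef_coercive:
  assumes "posdef (A::complex^'n^'n)"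
  obtains \<alpha> where "\<alpha> > 0" "\<And>x. inner x (A *v x) \<ge> \<alpha> * (norm x)\<^sup>2"
proof -
  let ?f = "\<lambda>x::complex^'n. inner x (A *v x)"
  have "continuous_on (sphere 0 1) ?f"
    by (intro continuous_intros linear_continuous_on matrix_vector_mul_bounded_linear)
  moreover have "sphere (0::complex^'n) 1 \<noteq> {}" by simp
  ultimately obtain x0 where x0: "x0 \<in> sphere 0 1" "\<forall>y\<in>sphere 0 1. ?f x0 \<le> ?f y"
    using continuous_attains_inf[OF compact_sphere] by blast
  moreover from x0(1) have "x0 \<noteq> 0" by auto
  ultimately have "?f x0 > 0"
    using posdefD[OF assms, of x0] by (simp add: inner_eq_Re_cinner)
  moreover have "?f x \<ge> ?f x0 * (norm x)\<^sup>2" for x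
  proof (cases "x = 0")
    case False
    define u where "u = (1 / norm x) *\<^sub>R x"
    have xu: "x = norm x *\<^sub>R u" using False by (simp add: u_def)
    have fx: "?f x = ?f u * (norm x)\<^sup>2"
      by (subst (1 2) xu) (simp add: matrix_vector_mult_scaleR_right power2_eq_square)
    have "u \<in> sphere 0 1" using False by (simp add: u_def)
    then have "?f x0 \<le> ?f u" using x0(2) by blast
    then show ?thesis unfolding fx by (simp add: mult_right_mono)
  qed simp
  ultimately show ?thesis using that by blast
qed

lemma norm_matrix_sq_entries:
  "(norm (A::complex^'n^'m))\<^sup>2 = (\<Sum>i\<in>UNIV. \<Sum>j\<in>UNIV. (norm (A $ i $ j))\<^sup>2)"
  by (simp add: norm_vec_def L2_set_def sum_nonneg)

lemma norm_matrix_sq_columns: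
  "(norm (A::complex^'n^'m))\<^sup>2 = (\<Sum>j\<in>UNIV. (norm (column j A))\<^sup>2)"
proof -
  have "(\<Sum>j\<in>UNIV. (norm (column j A))\<^sup>2) = (\<Sum>j\<in>UNIV. \<Sum>i\<in>UNIV. (norm (A $ i $ j))\<^sup>2)"
    by (simp add: norm_vec_def L2_set_def sum_nonneg column_def)
  also have "\<dots> = (\<Sum>i\<in>UNIV. \<Sum>j\<in>UNIV. (norm (A $ i $ j))\<^sup>2)"
    by (rule sum.swap)
  finally show ?thesis by (simp add: norm_matrix_sq_entries)
qed

lemma norm_cadj: "norm (cadj (A::complex^'n^'m)) = norm A"
proof -
  have "(norm (cadj A))\<^sup>2 = (\<Sum>j\<in>UNIV. \<Sum>i\<in>UNIV. (norm (A $ i $ j))\<^sup>2)"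
    by (simp add: norm_matrix_sq_entries cadj_def)
  also have "\<dots> = (\<Sum>i\<in>UNIV. \<Sum>j\<in>UNIV. (norm (A $ i $ j))\<^sup>2)"
    by (rule sum.swap)
  finally show ?thesis
    by (simp flip: norm_matrix_sq_entries add: power2_eq_iff_nonneg)
qed

lemma column_matrix_mul: "column j ((Y::complex^'n^'m) ** D) = Y *v column j D"
  by (simp add: column_def matrix_matrix_mult_def matrix_vector_mult_def vec_eq_iff)

lemma norm_matrix_mul_le:
  assumes Y: "\<And>x. norm ((Y::complex^'n^'m) *v x) \<le> \<rho> * norm x" and "0 \<le> \<rho>"
  shows "norm (Y ** D) \<le> \<rho> * norm (D::complex^'k^'n)"
proof -
  have "(norm (Y ** D))\<^sup>2 = (\<Sum>j\<in>UNIV. (norm (Y *v column j D))\<^sup>2)"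
    by (simp add: norm_matrix_sq_columns column_matrix_mul)
  also have "\<dots> \<le> (\<Sum>j\<in>UNIV. (\<rho> * norm (column j D))\<^sup>2)"
    by (intro sum_mono power_mono Y) simp
  also have "\<dots> = (\<rho> * norm D)\<^sup>2"
    by (simp add: norm_matrix_sq_columns[of D] power_mult_distrib sum_distrib_left)
  finally show ?thesis
    using assms(2) by (simp add: power2_le_iff_abs_le)
qed

lemma norm_matrix_mul_hermitian_le:
  assumes "\<And>x. norm ((Z::complex^'n^'n) *v x) \<le> \<rho> * norm x" "0 \<le> \<rho>" "hermitian Z"
  shows "norm (D ** Z) \<le> \<rho> * norm (D::complex^'n^'k)"
  using norm_matrix_mul_le[OF assms(1,2), of "cadj D"] assms(3)
  by (metis cadj_matrix_mul hermitian_def norm_cadj)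

lemma posdef_shift_contraction:
  assumes pA: "posdef (A::complex^'n^'n)"
  obtains c r where "c > 0" "0 \<le> r" "r < 1" "\<And>x. norm ((mat 1 - c *\<^sub>R A) *v x) \<le> r * norm x"
proof -
  obtain \<alpha> where a: "\<alpha> > 0" "\<And>x. inner x (A *v x) \<ge> \<alpha> * (norm x)\<^sup>2"
    using posdef_coercive[OF pA] by blast
  obtain \<beta>0 where b0: "\<beta>0 > 0" "\<And>x. norm (A *v x) \<le> norm x * \<beta>0"
    using bounded_linear.pos_bounded[OF matrix_vector_mul_bounded_linear[of A]] by blast
  define \<beta> where "\<beta> = max \<beta>0 \<alpha>"
  have b: "\<beta> > 0" "\<alpha> \<le> \<beta>" "\<And>x. norm (A *v x) \<le> \<beta> * norm x"
    unfolding \<beta>_def using b0 a(1)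
    by (auto simp: mult.commute intro: order_trans[OF _ mult_left_mono[OF max.cobounded1]])
  define c where "c = \<alpha> / \<beta>\<^sup>2"
  define q where "q = 1 - \<alpha>\<^sup>2 / \<beta>\<^sup>2"
  have c: "c > 0" using a b by (simp add: c_def)
  have q: "0 \<le> q" "q < 1" using a b by (auto simp: q_def power_mono field_simps)
  have "norm ((mat 1 - c *\<^sub>R A) *v x) \<le> sqrt q * norm x" for x
  proof -
    have Mx: "(mat 1 - c *\<^sub>R A) *v x = x - c *\<^sub>R (A *v x)"
      by (simp add: matrix_vector_mult_diff_rdistrib matrix_vector_mult_scaleR_left)
    have "(norm ((mat 1 - c *\<^sub>R A) *v x))\<^sup>2
        = (norm x)\<^sup>2 - 2 * c * inner x (A *v x) + c\<^sup>2 * (norm (A *v x))\<^sup>2"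
      unfolding Mx power2_norm_eq_inner
      by (simp add: inner_diff_left inner_diff_right inner_commute[of "A *v x" x]
          power2_eq_square algebra_simps)
    also have "\<dots> \<le> (norm x)\<^sup>2 - 2 * c * (\<alpha> * (norm x)\<^sup>2) + c\<^sup>2 * (\<beta> * norm x)\<^sup>2"
      using a(2)[of x] b(3)[of x] c
      by (intro add_mono diff_mono mult_left_mono power_mono order_refl) auto
    also have "\<dots> = (sqrt q * norm x)\<^sup>2"
      using b(1) q by (simp add: c_def q_def power_mult_distrib power2_eq_square field_simps)
    finally show ?thesis
      using q by (simp add: power2_le_iff_abs_le)
  qed
  moreover have "0 \<le> sqrt q" "sqrt q < 1" using q by simp_all
  ultimately show ?thesis using that c by blast
qed

text \<open>The fixed point \<open>Y\<close> of \<open>Y \<mapsto> (M + Y\<^sup>2)/2\<close> gives the square root \<open>I - Y\<close> of \<open>I - M\<close>.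
  On Hermitian matrices of operator norm \<open>\<le> \<rho>\<close> this map is a contraction with constant \<open>\<rho>\<close>
  because \<open>F Y - F Z = (Y (Y - Z) + (Y - Z) Z)/2\<close>, and it maps that set into itself
  as soon as \<open>r + \<rho>\<^sup>2 = 2\<rho>\<close>.\<close>
lemma hermitian_contraction_fixpoint:
  assumes hM: "hermitian M" and bM: "\<And>x. norm ((M::complex^'n^'n) *v x) \<le> r * norm x"
    and r: "0 \<le> r" "r < 1"
  obtains Y \<rho> where "hermitian Y" "\<rho> < 1" "\<And>x. norm (Y *v x) \<le> \<rho> * norm x"
    "M + Y ** Y = 2 *\<^sub>R Y"
proof -
  define \<rho> where "\<rho> = 1 - sqrt (1 - r)"
  have \<rho>: "0 \<le> \<rho>" "\<rho> < 1" using r by (auto simp: \<rho>_def)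
  have \<rho>_eq: "r + \<rho> * \<rho> = 2 * \<rho>"
    using r by (simp add: \<rho>_def algebra_simps)
  define K where "K = {Y::complex^'n^'n. hermitian Y \<and> (\<forall>x. norm (Y *v x) \<le> \<rho> * norm x)}"
  define F where "F Y = (1/2::real) *\<^sub>R (M + Y ** Y)" for Y :: "complex^'n^'n"
  have cadj_cont: "continuous_on UNIV (cadj :: complex^'n^'n \<Rightarrow> _)"
    unfolding cadj_def by (intro continuous_intros)
  have mulvec_cont: "continuous_on UNIV (\<lambda>Y::complex^'n^'n. Y *v x)" for x
    unfolding matrix_vector_mult_def by (intro continuous_intros)
  have "K = {Y. cadj Y = Y} \<inter> (\<Inter>x. {Y. norm (Y *v x) \<le> \<rho> * norm x})"
    by (auto simp: K_def hermitian_def)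
  also have "closed \<dots>"
    by (intro closed_Int closed_INT ballI closed_Collect_eq closed_Collect_le cadj_cont mulvec_cont
        continuous_on_id continuous_on_norm continuous_on_const)
  finally have "complete K" by (simp add: complete_eq_closed)
  moreover have "0 \<in> K" using \<rho> by (simp add: K_def hermitian_def)
  moreover have "F ` K \<subseteq> K"
  proof clarify
    fix Y assume "Y \<in> K"
    then have hY: "hermitian Y" and bY: "\<And>x. norm (Y *v x) \<le> \<rho> * norm x" by (auto simp: K_def)
    have "norm (F Y *v x) \<le> \<rho> * norm x" for x
    proof -
      have "norm (F Y *v x) \<le> (1/2) * (norm (M *v x) + norm (Y *v (Y *v x)))"
        by (simp add: F_def matrix_vector_mult_scaleR_left matrix_vector_mult_add_rdistrib
            matrix_vector_mul_assoc norm_triangle_ineq)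
      also have "\<dots> \<le> (1/2) * (r * norm x + \<rho> * (\<rho> * norm x))"
        using bM[of x] bY[of "Y *v x"] bY[of x] \<rho>(1)
        by (intro mult_left_mono add_mono order_trans[OF bY mult_left_mono]) auto
      also have "\<dots> = (1/2) * ((r + \<rho> * \<rho>) * norm x)" by (simp add: algebra_simps)
      also have "\<dots> = \<rho> * norm x" using \<rho>_eq by simp
      finally show ?thesis .
    qed
    moreover have "hermitian (F Y)" using hY hM
      by (simp add: F_def hermitian_def cadj_scaleR cadj_add cadj_matrix_mul)
    ultimately show "F Y \<in> K" by (simp add: K_def)
  qed
  moreover have "dist (F Y) (F Z) \<le> \<rho> * dist Y Z" if "Y \<in> K" "Z \<in> K" for Y Z
  proof -
    have "dist (F Y) (F Z) = (1/2) * norm (Y ** (Y - Z) + (Y - Z) ** Z)"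
      by (simp add: F_def dist_norm matrix_diff_ldistrib matrix_diff_rdistrib
          flip: scaleR_diff_right)
    also have "\<dots> \<le> (1/2) * (\<rho> * norm (Y - Z) + \<rho> * norm (Y - Z))"
      using that \<rho>(1)
      by (intro mult_left_mono order_trans[OF norm_triangle_ineq] add_mono
          norm_matrix_mul_le norm_matrix_mul_hermitian_le) (auto simp: K_def)
    finally show ?thesis by (simp add: dist_norm)
  qed
  ultimately obtain Y where Y: "Y \<in> K" "F Y = Y"
    using Banach_fix[OF _ _ \<rho>] by blast
  have "M + Y ** Y = 2 *\<^sub>R F Y" by (simp add: F_def)
  then show ?thesis
    using that[of Y \<rho>] Y \<rho>(2) by (simp add: K_def)
qed

lemma posdef_sqrt_exists:
  assumes hA: "hermitian A" and pA: "posdef (A::complex^'n^'n)"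
  obtains S where "hermitian S" "posdef S" "S ** S = A"
proof -
  obtain c r where c: "c > 0" and r: "0 \<le> r" "r < 1"
    and bM: "\<And>x. norm ((mat 1 - c *\<^sub>R A) *v x) \<le> r * norm x"
    using posdef_shift_contraction[OF pA] by blast
  have "hermitian (mat 1 - c *\<^sub>R A)"
    using hA by (simp add: hermitian_def cadj_diff cadj_scaleR)
  then obtain Y \<rho> where hY: "hermitian Y" and \<rho>: "\<rho> < 1"
    and bY: "\<And>x. norm (Y *v x) \<le> \<rho> * norm x" and fixpoint: "mat 1 - c *\<^sub>R A + Y ** Y = 2 *\<^sub>R Y"
    using hermitian_contraction_fixpoint[OF _ bM r] by blast
  define S where "S = (1 / sqrt c) *\<^sub>R (mat 1 - Y)"
  have "(mat 1 - Y) ** (mat 1 - Y) = c *\<^sub>R A"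
    using fixpoint by (simp add: matrix_diff_ldistrib matrix_diff_rdistrib scaleR_2 algebra_simps)
  then have "S ** S = A"
    using c by (simp add: S_def matrix_scalar_ac flip: scalar_matrix_assoc)
  moreover have "hermitian S"
    using hY by (simp add: S_def hermitian_def cadj_scaleR cadj_diff)
  moreover have "posdef S"
  proof (rule hermitian_posdefI[OF \<open>hermitian S\<close>])
    fix x :: "complex^'n" assume "x \<noteq> 0"
    have "inner x (Y *v x) \<le> norm x * (\<rho> * norm x)"
      using norm_cauchy_schwarz[of x "Y *v x"] bY[of x] by (simp add: order_trans mult_left_mono)
    then have "inner x ((mat 1 - Y) *v x) \<ge> (1 - \<rho>) * (norm x)\<^sup>2"
      by (simp add: matrix_vector_mult_diff_rdistrib inner_diff_right power2_norm_eq_inner [symmetric]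
          power2_eq_square algebra_simps)
    moreover have "(1 - \<rho>) * (norm x)\<^sup>2 > 0" using \<rho> \<open>x \<noteq> 0\<close> by simp
    ultimately show "inner x (S *v x) > 0"
      using c by (simp add: S_def matrix_vector_mult_scaleR_left)
  qed
  ultimately show ?thesis using that by blast
qed

lemma psqrt_correct:
  assumes "hermitian A" "posdef (A::complex^'n^'n)"
  shows hermitian_psqrt: "hermitian (psqrt A)" and posdef_psqrt: "posdef (psqrt A)"
    and psqrt_square: "psqrt A ** psqrt A = A"
proof -
  have "\<exists>!S. hermitian S \<and> posdef S \<and> S ** S = A"
    using posdef_sqrt_exists[OF assms] posdef_sqrt_unique by metis
  then have "hermitian (psqrt A) \<and> posdef (psqrt A) \<and> psqrt A ** psqrt A = A"
    unfolding psqrt_def by (rule theI')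
  then show "hermitian (psqrt A)" "posdef (psqrt A)" "psqrt A ** psqrt A = A" by auto
qed

lemma psqrt_of_square:
  assumes "hermitian S" "posdef (S::complex^'n^'n)"
  shows "psqrt (S ** S) = S"
  unfolding psqrt_def
  by (rule the_equality) (use assms posdef_sqrt_unique in auto)

section \<open>\<open>j\<close>-unitary matrices\<close>

definition j_unitary :: "'p::finite cmat \<Rightarrow> bool" where
  "j_unitary U \<longleftrightarrow> cadj U ** jmat ** U = jmat"

lemma j_unitaryD: "j_unitary U \<Longrightarrow> cadj U ** (jmat ** U) = jmat"
  and j_unitary_cancel: "j_unitary U \<Longrightarrow> cadj U ** (jmat ** (U ** X)) = jmat ** X"
  by (simp_all add: j_unitary_def matrix_mul_assoc)

lemma j_unitary_mat_1: "j_unitary (mat 1)"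
  by (simp add: j_unitary_def)

lemma j_unitary_mult:
  assumes "j_unitary U" "j_unitary V"
  shows "j_unitary (U ** V)"
  by (simp add: j_unitary_def cadj_matrix_mul matrix_mul_assoc [symmetric]
      j_unitary_cancel[OF assms(1)] j_unitaryD[OF assms(2)])

lemma jadm_imp_j_unitary: "jadm R \<Longrightarrow> j_unitary R"
  by (simp add: jadm_def j_unitary_def hermitian_def)

lemma j_unitary_szego_factor:
  assumes "jadm R"
  shows "j_unitary (mat \<i> ** jmat ** R)"
proof -
  have "cadj (mat \<i> ** jmat ** R) = mat (- \<i>) ** (cadj R ** jmat)"
    by (simp add: cadj_matrix_mul matrix_mul_mat_commute matrix_mul_mat_left_commute)
  then show ?thesis
    by (simp add: j_unitary_def matrix_mul_assoc [symmetric] matrix_mul_mat_left_commute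
        mat_mul_mat jmat_mult_jmat_left j_unitaryD[OF jadm_imp_j_unitary[OF assms]])
qed

lemma j_unitary_left_inverse:
  assumes "j_unitary U"
  shows "(jmat ** cadj U ** jmat) ** U = mat 1"
  by (simp add: matrix_mul_assoc [symmetric] jmat_mult_jmat j_unitaryD[OF assms])

lemma j_unitary_invertible: "j_unitary U \<Longrightarrow> invertible U"
  using j_unitary_left_inverse invertible_left_inverse by blast

lemma j_unitary_cadj:
  assumes "j_unitary U"
  shows "j_unitary (cadj U)"
proof -
  have "U ** (jmat ** cadj U ** jmat) = mat 1"
    using j_unitary_left_inverse[OF assms] matrix_left_right_inverse by blast
  moreover have "U ** jmat ** cadj U = (U ** (jmat ** cadj U ** jmat)) ** jmat"
    by (simp add: matrix_mul_assoc [symmetric] jmat_mult_jmat)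
  ultimately show ?thesis by (simp add: j_unitary_def)
qed

lemma matrix_inv_j_unitary:
  assumes "j_unitary U"
  shows "matrix_inv U = jmat ** cadj U ** jmat"
    and "matrix_inv (cadj U) = jmat ** U ** jmat"
  using j_unitary_left_inverse[OF assms] j_unitary_left_inverse[OF j_unitary_cadj[OF assms]]
  by (simp_all add: matrix_inv_unique)

lemma szegoU_j_unitary:
  assumes "\<And>k. jadm (R k)"
  shows "j_unitary (szegoU R k)"
proof (induction k)
  case (Suc k)
  then show ?case by (simp add: j_unitary_mult j_unitary_szego_factor assms)
qed (simp add: j_unitary_mat_1)

section \<open>From Szego recurrences to Dirac systems\<close>

lemma dirac_coefficient:
  assumes U: "j_unitary U" and R: "jadm R"
  defines "C \<equiv> matrix_inv (cadj U) ** (R ** R) ** matrix_inv U"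
  shows "posdef C" "hermitian C" "C ** jmat ** C = jmat"
    and "jmat ** C ** U = U ** jmat ** R ** R"
proof -
  have hR: "cadj R = R" and pR: "posdef R" using R by (auto simp: jadm_def hermitian_def)
  have C: "C = jmat ** U ** jmat ** R ** R ** jmat ** cadj U ** jmat"
    by (simp add: C_def matrix_inv_j_unitary[OF U] matrix_mul_assoc)
  have V: "invertible (matrix_inv U)" "cadj (matrix_inv U) = matrix_inv (cadj U)"
    using matrix_inv_left[OF j_unitary_invertible[OF U]] invertible_right_inverse
      matrix_inv_cadj[OF j_unitary_invertible[OF U]] by auto
  have "hermitian (R ** R)" "posdef (R ** R)"
    using R posdef_square by (auto simp: jadm_def hermitian_square)
  then show "posdef C" "hermitian C"
    using posdef_congruence[OF _ V(1)] hermitian_congruence[of _ "matrix_inv U"] V(2)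
    by (auto simp: C_def)
  note cancel = j_unitaryD[OF U] j_unitary_cancel[OF U] j_unitary_cancel[OF j_unitary_cadj[OF U], simplified]
    j_unitary_cancel[OF jadm_imp_j_unitary[OF R], unfolded hR]
  show "C ** jmat ** C = jmat" "jmat ** C ** U = U ** jmat ** R ** R"
    unfolding C by (simp_all add: matrix_mul_assoc [symmetric] cancel jmat_mult_jmat jmat_mult_jmat_left)
qed

lemma bdiag_cayley:
  assumes "1 - \<i> * lam \<noteq> 0"
  shows "bdiag ((1 + \<i> * lam) / (1 - \<i> * lam)) 1
    = mat (1 / (1 - \<i> * lam)) ** (mat 1 + mat (\<i> * lam) ** (jmat :: 'p::finite cmat))"
  using assms by (simp add: mat_eq_bdiag jmat_def bdiag_mult bdiag_add)

text \<open>The Cayley transform \<open>z = (1 + i\<lambda>)/(1 - i\<lambda>)\<close> turns \<open>diag(z I\<^sub>p, I\<^sub>p)\<close> into an affine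
  function of \<open>j\<close>; together with \<open>(j R)\<^sup>2 = I\<close> this collapses one Szego step to a Dirac step.\<close>
lemma szego_dirac_identity:
  assumes R: "R ** jmat ** R = jmat" and lam: "lam \<noteq> 0" "1 - \<i> * lam \<noteq> 0"
  shows "mat ((\<i> - 1 / lam) * \<i>) ** (jmat ** R ** bdiag ((1 + \<i> * lam) / (1 - \<i> * lam)) 1 ** R)
    = mat 1 + mat (- \<i> / lam) ** (jmat ** R ** R)"
proof -
  define a where "a = 1 - \<i> * lam"
  have jRjR: "jmat ** (R ** (jmat ** R)) = mat 1"
    using R by (simp add: matrix_mul_assoc jmat_mult_jmat)
  have "jmat ** R ** bdiag ((1 + \<i> * lam) / (1 - \<i> * lam)) 1 ** R
      = mat (1 / a) ** (jmat ** R ** R) + mat (1 / a * (\<i> * lam))"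
    using lam(2)
    by (simp add: bdiag_cayley a_def matrix_add_ldistrib matrix_add_rdistrib matrix_mul_assoc [symmetric]
        matrix_mul_mat_left_commute mat_mul_mat jRjR)
  moreover have "(\<i> - 1 / lam) * \<i> = - \<i> / lam * a"
    using lam(1) by (simp add: a_def field_simps)
  moreover have "- \<i> / lam * a * (1 / a) = - \<i> / lam" "- \<i> / lam * a * (1 / a * (\<i> * lam)) = 1"
    using lam by (simp_all add: a_def)
  ultimately show ?thesis
    by (simp add: matrix_add_ldistrib mat_mul_mat mat_mult_mat)
qed

lemma szego_to_dirac_step:
  fixes R :: "nat \<Rightarrow> 'p::finite cmat" and X :: "nat \<Rightarrow> complex \<Rightarrow> complex^'q^('p + 'p)"
  assumes adm: "\<And>k. jadm (R k)" and \<theta>: "\<And>k. \<theta> (R k) \<noteq> 0"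
    and rec: "\<And>k z. X (Suc k) z = mat (\<theta> (R k)) ** R k ** bdiag z 1 ** X k z"
    and lam: "lam \<noteq> 0" "1 - \<i> * lam \<noteq> 0"
  defines "z \<equiv> (1 + \<i> * lam) / (1 - \<i> * lam)"
  defines "W \<equiv> \<lambda>k. mat ((\<i> - 1 / lam) ^ k / (\<Prod>r<k. \<theta> (R r))) ** szegoU R k ** bdiag z 1 ** X k z"
  shows "W (Suc k) - W k = mat (- \<i> / lam) ** jmat **
    (matrix_inv (cadj (szegoU R k)) ** (R k ** R k) ** matrix_inv (szegoU R k)) ** W k"
proof -
  let ?U = "szegoU R k" and ?D = "bdiag z 1 :: 'p cmat" and ?Y = "X k z"
  let ?C = "matrix_inv (cadj ?U) ** (R k ** R k) ** matrix_inv ?U"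
  define c where "c = (\<i> - 1 / lam) ^ k / (\<Prod>r<k. \<theta> (R r))"
  have RjR: "R k ** jmat ** R k = jmat" using adm by (simp add: jadm_def)
  have "W (Suc k) = mat (c * (\<i> - 1 / lam) / \<theta> (R k)) ** (?U ** (mat \<i> ** jmat ** R k)) ** ?D
      ** (mat (\<theta> (R k)) ** R k ** ?D ** ?Y)"
    by (simp add: W_def c_def rec field_simps)
  also have "\<dots> = mat (c * (\<i> - 1 / lam) / \<theta> (R k) * (\<i> * \<theta> (R k)))
      ** (?U ** ((jmat ** R k ** ?D ** R k) ** (?D ** ?Y)))"
    by (simp add: matrix_mul_assoc [symmetric] matrix_mul_mat_left_commute mat_mul_mat mult_ac)
  also have "c * (\<i> - 1 / lam) / \<theta> (R k) * (\<i> * \<theta> (R k)) = c * ((\<i> - 1 / lam) * \<i>)"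
    using \<theta>[of k] by (simp add: field_simps)
  also have "mat (c * ((\<i> - 1 / lam) * \<i>)) ** (?U ** ((jmat ** R k ** ?D ** R k) ** (?D ** ?Y)))
      = mat c ** (?U ** ((mat ((\<i> - 1 / lam) * \<i>) ** (jmat ** R k ** ?D ** R k)) ** (?D ** ?Y)))"
    by (simp add: matrix_mul_assoc [symmetric] matrix_mul_mat_left_commute mat_mul_mat)
  also have "\<dots> = mat c ** (?U ** ((mat 1 + mat (- \<i> / lam) ** (jmat ** R k ** R k)) ** (?D ** ?Y)))"
    using szego_dirac_identity[OF RjR lam] by (simp add: z_def)
  also have "\<dots> = W k + mat (- \<i> / lam) ** (mat c ** ((?U ** jmat ** R k ** R k) ** ?D ** ?Y))"
    by (simp add: W_def c_def matrix_add_ldistrib matrix_add_rdistrib matrix_mul_assoc [symmetric]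
        matrix_mul_mat_left_commute mat_mul_mat mult_ac)
  also have "\<dots> = W k + mat (- \<i> / lam) ** (mat c ** ((jmat ** ?C ** ?U) ** ?D ** ?Y))"
    by (simp add: dirac_coefficient(4)[OF szegoU_j_unitary[OF adm] adm])
  also have "\<dots> = W k + mat (- \<i> / lam) ** jmat ** ?C ** W k"
    by (simp add: W_def c_def matrix_mul_assoc [symmetric] matrix_mul_mat_left_commute)
  finally show ?thesis by simp
qed

section \<open>From Dirac systems to Szego recurrences\<close>

text \<open>\<open>R\<^sup>2 j R\<^sup>2 = j\<close> says that \<open>j R j\<close> and \<open>R\<^sup>-\<^sup>1\<close> have the same square; both are positive
  definite, so they coincide.\<close>
lemma posdef_sqrt_j_invariant:
  assumes hR: "hermitian R" and pR: "posdef R" and sq: "(R ** R) ** jmat ** (R ** R) = jmat"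
  shows "R ** jmat ** R = jmat"
proof -
  define V where "V = jmat ** R ** jmat"
  define Ri where "Ri = matrix_inv R"
  have iR: "invertible R" using posdef_imp_invertible[OF pR] .
  have RiR: "Ri ** R = mat 1" using matrix_inv_left[OF iR] by (simp add: Ri_def)
  have hV: "hermitian V" "posdef V"
    using hermitian_congruence[OF hR, of jmat] posdef_congruence[OF pR invertible_jmat]
    by (simp_all add: V_def)
  have "(V ** V) ** (R ** R) = jmat ** ((R ** R) ** jmat ** (R ** R))"
    by (simp add: V_def matrix_mul_assoc [symmetric] jmat_mult_jmat_left)
  then have "matrix_inv (R ** R) = V ** V"
    using sq by (simp add: jmat_mult_jmat matrix_inv_unique)
  moreover have "(Ri ** Ri) ** (R ** R) = Ri ** ((Ri ** R) ** R)"
    by (simp add: matrix_mul_assoc)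
  then have "matrix_inv (R ** R) = Ri ** Ri"
    by (simp add: RiR matrix_inv_unique)
  ultimately have "V = Ri"
    using posdef_sqrt_unique[OF hV] hermitian_matrix_inv[OF hR iR] posdef_matrix_inv[OF hR pR]
    by (simp add: Ri_def)
  then have "jmat ** ((jmat ** R ** jmat) ** R) = jmat"
    by (simp add: V_def RiR jmat_mult_jmat)
  then show ?thesis by (simp add: matrix_mul_assoc [symmetric] jmat_mult_jmat_left)
qed

lemma jadm_psqrt_congruence:
  fixes C :: "'p::finite cmat"
  assumes U: "j_unitary U" and pC: "posdef C" and hC: "hermitian C" and C: "C ** jmat ** C = jmat"
  shows "jadm (psqrt (cadj U ** C ** U))"
proof -
  let ?A = "cadj U ** C ** U"
  have hA: "hermitian ?A" and pA: "posdef ?A"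
    using hermitian_congruence[OF hC] posdef_congruence[OF pC j_unitary_invertible[OF U]] by auto
  have C': "C ** (jmat ** (C ** X)) = jmat ** X" for X :: "'p cmat"
    using C by (simp add: matrix_mul_assoc)
  have "?A ** jmat ** ?A = jmat"
    by (simp add: matrix_mul_assoc [symmetric] C' j_unitaryD[OF U]
        j_unitary_cancel[OF j_unitary_cadj[OF U], simplified])
  then show ?thesis
    using posdef_sqrt_j_invariant[OF hermitian_psqrt[OF hA pA] posdef_psqrt[OF hA pA]]
      hermitian_psqrt[OF hA pA] posdef_psqrt[OF hA pA]
    by (simp add: jadm_def psqrt_square[OF hA pA])
qed

lemma diracU_j_unitary:
  assumes "\<And>k. posdef (C k) \<and> hermitian (C k) \<and> C k ** jmat ** C k = jmat"
  shows "j_unitary (diracU C k)"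
proof (induction k)
  case (Suc k)
  then show ?case
    using jadm_psqrt_congruence[OF Suc] assms
    by (simp add: j_unitary_mult j_unitary_szego_factor)
qed (simp add: j_unitary_mat_1)

lemma congruence_cancel:
  assumes "invertible (U::complex^'n^'n)"
  shows "matrix_inv (cadj U) ** (cadj U ** C ** U) ** matrix_inv U = C"
    and "cadj U ** (matrix_inv (cadj U) ** C ** matrix_inv U) ** U = C"
  using matrix_inv_left[OF assms] matrix_inv_right[OF assms]
    matrix_inv_left[OF invertible_cadj[OF assms]] matrix_inv_right[OF invertible_cadj[OF assms]]
  by (simp_all add: matrix_mul_assoc [symmetric]) (simp_all add: matrix_mul_assoc)

lemma dirac_szego_dirac:
  assumes C: "\<And>k. posdef (C k) \<and> hermitian (C k) \<and> C k ** jmat ** C k = jmat"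
  shows "jadm (diracR C k)"
    and "C k = matrix_inv (cadj (diracU C k)) ** (diracR C k ** diracR C k) ** matrix_inv (diracU C k)"
proof -
  let ?U = "diracU C k"
  have hA: "hermitian (cadj ?U ** C k ** ?U)" and pA: "posdef (cadj ?U ** C k ** ?U)"
    using C hermitian_congruence posdef_congruence[OF _ j_unitary_invertible[OF diracU_j_unitary[OF C]]]
    by auto
  show "jadm (diracR C k)"
    using jadm_psqrt_congruence[OF diracU_j_unitary[OF C]] C by (simp add: diracR_def)
  show "C k = matrix_inv (cadj ?U) ** (diracR C k ** diracR C k) ** matrix_inv ?U"
    by (simp add: diracR_def psqrt_square[OF hA pA]
        congruence_cancel(1)[OF j_unitary_invertible[OF diracU_j_unitary[OF C]]])
qed

lemma szego_dirac_szego: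
  assumes adm: "\<And>k. jadm (R k)"
  defines "C \<equiv> \<lambda>k. matrix_inv (cadj (szegoU R k)) ** (R k ** R k) ** matrix_inv (szegoU R k)"
  shows "diracR C k = R k" and "diracU C k = szegoU R k"
proof -
  note U_invertible = j_unitary_invertible[OF szegoU_j_unitary[OF adm]]
  have R: "psqrt (cadj (szegoU R k) ** C k ** szegoU R k) = R k" for k
    using adm[of k] by (simp add: C_def jadm_def psqrt_of_square congruence_cancel(2)[OF U_invertible])
  show U: "diracU C k = szegoU R k"
    by (induction k) (simp_all add: R)
  show "diracR C k = R k"
    by (simp add: diracR_def U R)
qed

theorem proposition2p1:
  fixes \<theta> :: "'p::finite cmat \<Rightarrow> complex"
  assumes theta_nz: "\<And>R. jadm R \<Longrightarrow> \<theta> R \<noteq> 0"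
  shows
    \<comment> \<open>(i)\<close>
    "(\<forall>R :: nat \<Rightarrow> 'p cmat. (\<forall>k. jadm (R k)) \<longrightarrow>
       (let U = szegoU R;
            C = (\<lambda>k. matrix_inv (cadj (U k)) ** (R k ** R k) ** matrix_inv (U k))
        in (\<forall>k. posdef (C k) \<and> hermitian (C k) \<and> C k ** jmat ** C k = jmat) \<and>
           (\<forall>X :: nat \<Rightarrow> complex \<Rightarrow> complex ^ 'q ^ ('p + 'p).
              (\<forall>k z. X (Suc k) z = mat (\<theta> (R k)) ** R k ** bdiag z 1 ** X k z) \<longrightarrow>
              (let W = (\<lambda>k lam. let z = (1 + \<i> * lam) / (1 - \<i> * lam) in
                          mat ((\<i> - 1 / lam) ^ k / (\<Prod>r<k. \<theta> (R r))) ** U k ** bdiag z 1 ** X k z)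
               in \<forall>k lam. lam \<noteq> 0 \<longrightarrow> 1 - \<i> * lam \<noteq> 0 \<longrightarrow>
                    W (Suc k) lam - W k lam = mat (- \<i> / lam) ** jmat ** C k ** W k lam))))
     \<and>
     \<comment> \<open>(ii)\<close>
     (\<forall>C :: nat \<Rightarrow> 'p cmat. (\<forall>k. posdef (C k) \<and> hermitian (C k) \<and> C k ** jmat ** C k = jmat) \<longrightarrow>
       (\<forall>k. jadm (diracR C k) \<and>
            C k = matrix_inv (cadj (diracU C k)) ** (diracR C k ** diracR C k) ** matrix_inv (diracU C k)))
     \<and>
     \<comment> \<open>mutual inverseness: (ii) applied to the C_k of (i) recovers R_k and U_k\<close>
     (\<forall>R :: nat \<Rightarrow> 'p cmat. (\<forall>k. jadm (R k)) \<longrightarrow>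
       (let C = (\<lambda>k. matrix_inv (cadj (szegoU R k)) ** (R k ** R k) ** matrix_inv (szegoU R k))
        in \<forall>k. diracR C k = R k \<and> diracU C k = szegoU R k))"
  unfolding Let_def
  apply (intro conjI allI impI)
  subgoal for R k by (rule dirac_coefficient(1)[OF szegoU_j_unitary]) auto
  subgoal for R k by (rule dirac_coefficient(2)[OF szegoU_j_unitary]) auto
  subgoal for R k by (rule dirac_coefficient(3)[OF szegoU_j_unitary]) auto
  subgoal for R X k lam by (rule szego_to_dirac_step) (auto simp: theta_nz)
  subgoal for C k by (rule dirac_szego_dirac(1)) auto
  subgoal for C k by (rule dirac_szego_dirac(2)) auto
  subgoal for R k by (rule szego_dirac_szego(1)) auto
  subgoal for R k by (rule szego_dirac_szego(2)) auto
  done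

end
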